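(* Every ordered graph $G$ with at least one edge has an edge $e$ with $\mathrm{h}_G(e)\ge \overline{d}(G)/2$.
   Context: An ordered graph is a finite simple graph $G$ equipped with a total order $\le_G$ on $E(G)$ and a total order $\le^V_G$ on $V(G)$. Let $\mathbb N=\{1,2,\dots\}$. Define $\preceq_{\mathrm{lex}}$ on $\mathbb N\times V(G)$ by $(i,v)\preceq_{\mathrm{lex}}(i',v')$ iff $i<i'$, or $i=i'$ and $v\le^V_G v'$. The height table $\mathrm{HT}(G)$ is a partially filled array indexed by $\mathbb N\times V(G)$, built by going through all $(i,v)$ in $\preceq_{\mathrm{lex}}$-increasing order and setting the entry at $(i,v)$ to be the $\le_G$-largest edge containing $v$ not yet entered into the table (blank if none remain). Every edge is entered exactly once; $\mathrm{h}_G(e)$ denotes the row of $\mathrm{HT}(G)$ containing $e$. $\overline{d}(G)=2|E(G)|/|V(G)|$ is the average degree. *)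

theory Defs
  imports Complex_Main
begin

definition ordered_graph :: "'a set \<Rightarrow> 'a rel \<Rightarrow> 'a set set \<Rightarrow> 'a set rel \<Rightarrow> bool" where
  "ordered_graph V lV E lE \<longleftrightarrow> finite V
     \<and> (\<forall>e\<in>E. \<exists>u v. u \<in> V \<and> v \<in> V \<and> u \<noteq> v \<and> e = {u, v})
     \<and> linear_order_on V lV \<and> linear_order_on E lE"

definition max_rel :: "'b rel \<Rightarrow> 'b set \<Rightarrow> 'b" where
  "max_rel r S = (THE x. x \<in> S \<and> (\<forall>y\<in>S. (y, x) \<in> r))"

definition vlist :: "'a set \<Rightarrow> 'a rel \<Rightarrow> 'a list" where
  "vlist V lV = (THE xs. set xs = V \<and> distinct xs \<and> sorted_wrt (\<lambda>x y. (x, y) \<in> lV) xs)"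

definition vpos :: "'a set \<Rightarrow> 'a rel \<Rightarrow> 'a \<Rightarrow> nat" where
  "vpos V lV v = (THE j. j < card V \<and> vlist V lV ! j = v)"

text \<open>Entry written at a cell for vertex v when R is the set of edges not yet entered.\<close>
definition cell_entry :: "'a set rel \<Rightarrow> 'a set set \<Rightarrow> 'a \<Rightarrow> 'a set option" where
  "cell_entry lE R v = (if \<exists>e\<in>R. v \<in> e then Some (max_rel lE {e\<in>R. v \<in> e}) else None)"

text \<open>Edges not yet entered before processing the k-th cell (0-based) in lex order;
  cell k is (row k div |V| + 1, vertex number k mod |V|).\<close>
primrec ht_rem :: "'a set \<Rightarrow> 'a rel \<Rightarrow> 'a set set \<Rightarrow> 'a set rel \<Rightarrow> nat \<Rightarrow> 'a set set" where
  "ht_rem V lV E lE 0 = E"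
| "ht_rem V lV E lE (Suc k) = ht_rem V lV E lE k
     - set_option (cell_entry lE (ht_rem V lV E lE k) (vlist V lV ! (k mod card V)))"

text \<open>The height table: entry at (i, v) for i \<ge> 1 and v \<in> V (None = blank).\<close>
definition HT :: "'a set \<Rightarrow> 'a rel \<Rightarrow> 'a set set \<Rightarrow> 'a set rel \<Rightarrow> nat \<Rightarrow> 'a \<Rightarrow> 'a set option" where
  "HT V lV E lE i v = (if 1 \<le> i \<and> v \<in> V
     then cell_entry lE (ht_rem V lV E lE ((i - 1) * card V + vpos V lV v)) v else None)"

definition height :: "'a set \<Rightarrow> 'a rel \<Rightarrow> 'a set set \<Rightarrow> 'a set rel \<Rightarrow> 'a set \<Rightarrow> nat" where
  "height V lV E lE e = (THE i. \<exists>v\<in>V. HT V lV E lE i v = Some e)"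

definition avg_degree :: "'a set \<Rightarrow> 'a set set \<Rightarrow> real" where
  "avg_degree V E = 2 * real (card E) / real (card V)"

end

theory Submission
  imports Defs
begin

text \<open>Filling the height table visits the cells one after another and enters at most one
  edge per cell, so every edge e is entered at a well-defined cell index k(e), counted from 0
  row by row, and distinct edges have distinct indices. Hence some edge has k(e) \<ge> |E| - 1.
  Since e lies in row k(e) div |V| + 1, this gives h(e) |V| > k(e), i.e. h(e) \<ge> |E|/|V|,
  which is half the average degree.\<close>

lemma linear_order_rank_less:
  assumes "linear_order_on A r" "F \<subseteq> A" "finite F" "y \<in> F" "(x, y) \<in> r" "x \<noteq> y"
  shows "card {z\<in>F. (z, x) \<in> r} < card {z\<in>F. (z, y) \<in> r}"
proof (rule psubset_card_mono)
  have "trans r" "antisym r" "refl_on A r"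
    using assms(1) unfolding order_on_defs by auto
  then have "{z\<in>F. (z, x) \<in> r} \<subseteq> {z\<in>F. (z, y) \<in> r}" "y \<in> {z\<in>F. (z, y) \<in> r}"
    "y \<notin> {z\<in>F. (z, x) \<in> r}"
    using assms(2-6) by (auto dest: transD antisymD refl_onD)
  then show "{z\<in>F. (z, x) \<in> r} \<subset> {z\<in>F. (z, y) \<in> r}" by blast
qed (use assms(3) in simp)

lemma linear_order_sorted_list_exists:
  assumes "linear_order_on A r" "F \<subseteq> A" "finite F"
  shows "\<exists>xs. set xs = F \<and> distinct xs \<and> sorted_wrt (\<lambda>x y. (x, y) \<in> r) xs"
proof -
  define rank where "rank x = card {z\<in>F. (z, x) \<in> r}" for x
  obtain ys where ys: "set ys = F" "distinct ys"
    using finite_distinct_list[OF assms(3)] by blast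
  have "(x, y) \<in> r" if "x \<in> F" "y \<in> F" "rank x \<le> rank y" for x y
  proof (rule ccontr)
    assume "(x, y) \<notin> r"
    moreover have "x \<in> A" "y \<in> A" "refl_on A r" "total_on A r"
      using that(1,2) assms(1,2) unfolding order_on_defs by auto
    ultimately have "y \<noteq> x" "(y, x) \<in> r"
      unfolding total_on_def by (metis refl_onD)+
    then have "rank y < rank x"
      using linear_order_rank_less[OF assms \<open>x \<in> F\<close>] unfolding rank_def by blast
    with that(3) show False by simp
  qed
  moreover have "sorted_wrt (\<lambda>x y. rank x \<le> rank y) (sort_key rank ys)"
    using sorted_sort_key[of rank ys] by (simp only: sorted_map)
  ultimately have "sorted_wrt (\<lambda>x y. (x, y) \<in> r) (sort_key rank ys)"
    using ys(1) by (auto elim: sorted_wrt_mono_rel[rotated])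
  with ys show ?thesis by (intro exI[of _ "sort_key rank ys"]) simp
qed

lemma sorted_wrt_antisym_unique:
  assumes "antisym r"
  shows "\<lbrakk>set xs = set ys; distinct xs; distinct ys;
    sorted_wrt (\<lambda>x y. (x, y) \<in> r) xs; sorted_wrt (\<lambda>x y. (x, y) \<in> r) ys\<rbrakk> \<Longrightarrow> xs = ys"
proof (induction xs arbitrary: ys)
  case Nil
  then show ?case by simp
next
  case (Cons x xs)
  then obtain y ys' where ys: "ys = y # ys'" by (cases ys) auto
  have "x = y"
  proof (rule ccontr)
    assume "x \<noteq> y"
    then have "(x, y) \<in> r" "(y, x) \<in> r" using Cons.prems ys by auto
    with \<open>x \<noteq> y\<close> show False using assms by (meson antisymD)
  qed
  moreover have "set xs = set ys'" using Cons.prems ys \<open>x = y\<close> by auto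
  ultimately show ?case using Cons.IH Cons.prems ys by auto
qed

lemma vlist_set_distinct:
  assumes "linear_order_on V lV" "finite V"
  shows "set (vlist V lV) = V" "distinct (vlist V lV)"
proof -
  have "antisym lV" using assms(1) by (simp add: order_on_defs)
  then have "\<exists>!xs. set xs = V \<and> distinct xs \<and> sorted_wrt (\<lambda>x y. (x, y) \<in> lV) xs"
    using linear_order_sorted_list_exists[OF assms(1) subset_refl assms(2)]
      sorted_wrt_antisym_unique by blast
  from theI'[OF this] show "set (vlist V lV) = V" "distinct (vlist V lV)"
    unfolding vlist_def by auto
qed

lemma max_rel_mem:
  assumes "linear_order_on A r" "S \<subseteq> A" "finite S" "S \<noteq> {}"
  shows "max_rel r S \<in> S"
proof -
  obtain xs where xs: "set xs = S" "distinct xs" "sorted_wrt (\<lambda>x y. (x, y) \<in> r) xs"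
    using linear_order_sorted_list_exists[OF assms(1-3)] by blast
  have "xs \<noteq> []" "refl_on A r" "antisym r"
    using xs(1) assms(1,4) unfolding order_on_defs by auto
  have greatest: "(y, last xs) \<in> r" if y: "y \<in> S" for y
  proof -
    obtain i where i: "i < length xs" "xs ! i = y"
      using y xs(1) by (auto simp: in_set_conv_nth)
    show ?thesis
    proof (cases "i = length xs - 1")
      case True
      then show ?thesis
        using i \<open>xs \<noteq> []\<close> \<open>refl_on A r\<close> y assms(2) by (auto simp: last_conv_nth dest: refl_onD)
    next
      case False
      then show ?thesis
        using i \<open>xs \<noteq> []\<close> sorted_wrt_nth_less[OF xs(3), of i "length xs - 1"]
        by (simp add: last_conv_nth)
    qed
  qed
  have "last xs \<in> S" using xs(1) last_in_set[OF \<open>xs \<noteq> []\<close>] by blast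
  show ?thesis
    unfolding max_rel_def
  proof (rule theI2)
    show "last xs \<in> S \<and> (\<forall>y\<in>S. (y, last xs) \<in> r)"
      using greatest \<open>last xs \<in> S\<close> by blast
  next
    fix x
    assume "x \<in> S \<and> (\<forall>y\<in>S. (y, x) \<in> r)"
    then show "x = last xs"
      using greatest \<open>last xs \<in> S\<close> \<open>antisym r\<close> by (auto dest: antisymD)
  qed simp
qed

lemma cell_entry_SomeD:
  assumes "linear_order_on A r" "R \<subseteq> A" "finite R" "cell_entry r R v = Some e"
  shows "e \<in> R" "v \<in> e"
proof -
  have "{f\<in>R. v \<in> f} \<noteq> {}" "e = max_rel r {f\<in>R. v \<in> f}"
    using assms(4) unfolding cell_entry_def by (auto split: if_splits)
  then show "e \<in> R" "v \<in> e"
    using max_rel_mem[OF assms(1), of "{f\<in>R. v \<in> f}"] assms(2,3) by auto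
qed

lemma cell_entry_eq_None_iff: "cell_entry r R v = None \<longleftrightarrow> (\<forall>e\<in>R. v \<notin> e)"
  by (simp add: cell_entry_def)

lemma inj_on_nat_ex_ge_card:
  fixes f :: "'a \<Rightarrow> nat"
  assumes "inj_on f A" "finite A" "A \<noteq> {}"
  shows "\<exists>a\<in>A. card A \<le> Suc (f a)"
proof (rule ccontr)
  assume "\<not> ?thesis"
  then have "f ` A \<subseteq> {..<card A - 1}" by auto
  then have "card A \<le> card A - 1"
    using card_mono[of "{..<card A - 1}" "f ` A"] card_image[OF assms(1)] by simp
  moreover have "0 < card A" using assms(2,3) by (simp add: card_gt_0_iff)
  ultimately show False by arith
qed

locale height_table =
  fixes V :: "'a set" and lV :: "'a rel" and E :: "'a set set" and lE :: "'a set rel"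
  assumes ordered_graph: "ordered_graph V lV E lE"
begin

abbreviation rem :: "nat \<Rightarrow> 'a set set" where
  "rem \<equiv> ht_rem V lV E lE"

abbreviation vs :: "'a list" where
  "vs \<equiv> vlist V lV"

lemma finite_V: "finite V"
  and linear_order_V: "linear_order_on V lV"
  and linear_order_E: "linear_order_on E lE"
  and edge_two_vertices: "e \<in> E \<Longrightarrow> \<exists>u v. u \<in> V \<and> v \<in> V \<and> u \<noteq> v \<and> e = {u, v}"
  using ordered_graph unfolding ordered_graph_def by auto

lemma finite_E: "finite E"
proof (rule finite_subset)
  show "E \<subseteq> Pow V" using edge_two_vertices by blast
qed (use finite_V in simp)

lemma card_V_pos: "e \<in> E \<Longrightarrow> 0 < card V"
  using edge_two_vertices finite_V card_gt_0_iff by blast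

lemma set_vs: "set vs = V" and distinct_vs: "distinct vs"
  using vlist_set_distinct[OF linear_order_V finite_V] by auto

lemma length_vs: "length vs = card V"
  using distinct_card[OF distinct_vs] set_vs by simp

lemma vpos_nth: "j < card V \<Longrightarrow> vpos V lV (vs ! j) = j"
  unfolding vpos_def using distinct_vs length_vs by (auto simp: nth_eq_iff_index_eq)

lemma vpos_less: "v \<in> V \<Longrightarrow> vpos V lV v < card V"
  and nth_vpos: "v \<in> V \<Longrightarrow> vs ! vpos V lV v = v"
  using vpos_nth set_vs length_vs by (metis in_set_conv_nth)+

lemma rem_antimono: "k \<le> k' \<Longrightarrow> rem k' \<subseteq> rem k"
  by (induction rule: dec_induct) auto

lemma rem_subset_E: "rem k \<subseteq> E"
  using rem_antimono[of 0 k] by simp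

lemma finite_rem: "finite (rem k)"
  using finite_subset[OF rem_subset_E finite_E] .

lemma cell_entry_rem_SomeD:
  "cell_entry lE (rem k) v = Some e \<Longrightarrow> e \<in> rem k \<and> v \<in> e"
  using cell_entry_SomeD[OF linear_order_E rem_subset_E finite_rem] by blast

lemma card_rem_Suc_less:
  assumes "e \<in> rem k" "vs ! (k mod card V) \<in> e"
  shows "card (rem (Suc k)) < card (rem k)"
proof -
  obtain f where f: "cell_entry lE (rem k) (vs ! (k mod card V)) = Some f"
    using assms by (metis cell_entry_eq_None_iff not_None_eq)
  then have "f \<in> rem k" using cell_entry_rem_SomeD by blast
  then show ?thesis
    using f card_Diff1_less[OF finite_rem] by simp
qed

lemma edge_eventually_entered:
  assumes "e \<in> E"
  shows "\<exists>k. e \<notin> rem k"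
proof (rule ccontr)
  assume "\<not> ?thesis"
  then have stays: "e \<in> rem k" for k by blast
  obtain v where "v \<in> V" "v \<in> e" using edge_two_vertices[OF assms] by blast
  \<comment> \<open>While e is present, every cell of its endpoint v enters some edge.\<close>
  define c where "c j = card (rem (j * card V + vpos V lV v))" for j
  have desc: "c (Suc j) < c j" for j
  proof -
    have "(j * card V + vpos V lV v) mod card V = vpos V lV v"
      using vpos_less[OF \<open>v \<in> V\<close>] by simp
    then have "vs ! ((j * card V + vpos V lV v) mod card V) \<in> e"
      using nth_vpos \<open>v \<in> V\<close> \<open>v \<in> e\<close> by simp
    then have "card (rem (Suc (j * card V + vpos V lV v))) < c j"
      unfolding c_def by (rule card_rem_Suc_less[OF stays])
    moreover have "rem (Suc j * card V + vpos V lV v) \<subseteq> rem (Suc (j * card V + vpos V lV v))"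
      by (rule rem_antimono) (use card_V_pos[OF assms] in simp)
    ultimately show ?thesis
      unfolding c_def using card_mono[OF finite_rem] by (meson le_less_trans)
  qed
  have "c j + j \<le> c 0" for j
  proof (induction j)
    case (Suc j)
    with desc[of j] show ?case by simp
  qed simp
  from this[of "Suc (c 0)"] show False by simp
qed

lemma entry_cell_exists:
  assumes "e \<in> E"
  shows "\<exists>k. e \<in> rem k \<and> e \<notin> rem (Suc k)"
proof -
  obtain n where "e \<notin> rem n" using edge_eventually_entered[OF assms] by blast
  with assms show ?thesis using ex_least_nat_less[of "\<lambda>k. e \<notin> rem k" n] by auto
qed

lemma entry_cell_unique:
  assumes "e \<in> rem k" "e \<notin> rem (Suc k)" "e \<in> rem k'" "e \<notin> rem (Suc k')"
  shows "k = k'"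
proof (rule ccontr)
  assume "k \<noteq> k'"
  then consider "Suc k \<le> k'" | "Suc k' \<le> k" by linarith
  then show False
    by cases (use assms rem_antimono in blast)+
qed

definition entry_cell :: "'a set \<Rightarrow> nat" where
  "entry_cell e = (THE k. e \<in> rem k \<and> e \<notin> rem (Suc k))"

lemma entry_cell_eqI: "e \<in> rem k \<Longrightarrow> e \<notin> rem (Suc k) \<Longrightarrow> entry_cell e = k"
  unfolding entry_cell_def using entry_cell_unique by blast

lemma rem_entry_cell: "e \<in> E \<Longrightarrow> e \<in> rem (entry_cell e) \<and> e \<notin> rem (Suc (entry_cell e))"
  using entry_cell_exists entry_cell_eqI by blast

lemma cell_entry_entry_cell:
  assumes "e \<in> E"
  shows "cell_entry lE (rem (entry_cell e)) (vs ! (entry_cell e mod card V)) = Some e"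
  using rem_entry_cell[OF assms] by (cases "cell_entry lE (rem (entry_cell e)) (vs ! (entry_cell e mod card V))") auto

lemma inj_on_entry_cell: "inj_on entry_cell E"
  by (rule inj_onI) (metis cell_entry_entry_cell option.inject)

lemma HT_entry_cell:
  assumes "e \<in> E"
  shows "HT V lV E lE (entry_cell e div card V + 1) (vs ! (entry_cell e mod card V)) = Some e"
proof -
  have "entry_cell e mod card V < card V" using card_V_pos[OF assms] by simp
  then have "vs ! (entry_cell e mod card V) \<in> V"
    and "vpos V lV (vs ! (entry_cell e mod card V)) = entry_cell e mod card V"
    using set_vs length_vs vpos_nth by auto
  then show ?thesis
    using cell_entry_entry_cell[OF assms] unfolding HT_def by simp
qed

lemma HT_SomeD:
  assumes "HT V lV E lE i v = Some e"
  shows "1 \<le> i" "v \<in> V" "entry_cell e = (i - 1) * card V + vpos V lV v"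
proof -
  show "1 \<le> i" "v \<in> V" using assms unfolding HT_def by (auto split: if_splits)
  define k where "k = (i - 1) * card V + vpos V lV v"
  have "cell_entry lE (rem k) v = Some e"
    using assms \<open>1 \<le> i\<close> \<open>v \<in> V\<close> unfolding HT_def k_def by simp
  moreover have "vs ! (k mod card V) = v"
    using vpos_less[OF \<open>v \<in> V\<close>] nth_vpos[OF \<open>v \<in> V\<close>] unfolding k_def by simp
  ultimately have "e \<in> rem k" "e \<notin> rem (Suc k)"
    using cell_entry_rem_SomeD by auto
  then show "entry_cell e = (i - 1) * card V + vpos V lV v"
    unfolding k_def by (rule entry_cell_eqI)
qed

lemma height_eq_entry_cell:
  assumes "e \<in> E"
  shows "height V lV E lE e = entry_cell e div card V + 1"
  unfolding height_def
proof (rule the_equality)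
  show "\<exists>v\<in>V. HT V lV E lE (entry_cell e div card V + 1) v = Some e"
    using HT_entry_cell[OF assms] HT_SomeD(2) by blast
next
  fix i
  assume "\<exists>v\<in>V. HT V lV E lE i v = Some e"
  then obtain v where "v \<in> V" "HT V lV E lE i v = Some e" by blast
  with HT_SomeD[OF this(2)] vpos_less[OF \<open>v \<in> V\<close>] show "i = entry_cell e div card V + 1"
    by simp
qed

end

theorem lemma3p5:
  fixes V :: "'a set" and lV :: "'a rel" and E :: "'a set set" and lE :: "'a set rel"
  assumes "ordered_graph V lV E lE"
    and "E \<noteq> {}"
  shows "\<exists>e\<in>E. real (height V lV E lE e) \<ge> avg_degree V E / 2"
proof -
  interpret height_table V lV E lE by unfold_locales (fact assms(1))
  obtain e where "e \<in> E" and card_E_le: "card E \<le> Suc (entry_cell e)"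
    using inj_on_nat_ex_ge_card[OF inj_on_entry_cell finite_E assms(2)] by blast
  have "0 < card V" using card_V_pos[OF \<open>e \<in> E\<close>] .
  then have "entry_cell e < (entry_cell e div card V + 1) * card V"
    using dividend_less_times_div[of "card V" "entry_cell e"] by (simp add: algebra_simps)
  then have "card E \<le> height V lV E lE e * card V"
    using card_E_le height_eq_entry_cell[OF \<open>e \<in> E\<close>] by simp
  then have "real (card E) / real (card V) \<le> real (height V lV E lE e)"
    using \<open>0 < card V\<close> by (simp add: divide_le_eq flip: of_nat_mult)
  then show ?thesis
    using \<open>e \<in> E\<close> unfolding avg_degree_def by auto
qed

end
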